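(* A cancellative category $\mathcal C$ admits conditional weak left-lcms if and only if $\mathcal C$ is a strong Garside family in itself.
   Context: A category is cancellative if $fg=fg'\Rightarrow g=g'$ and $gf=g'f\Rightarrow g=g'$. $f\preccurlyeq g$ means $g=fg'$ for some $g'$. Two elements $f,g$ with the same source are left-disjoint if whenever $h\preccurlyeq h'f$ and $h\preccurlyeq h'g$, then $h\preccurlyeq h'$. An element $h$ is a weak left-lcm of $f,g$ (same target) if $h$ is a common left-multiple of $f$ and $g$ and every common left-multiple of $f$ and $g$ that admits a common left-multiple with $h$ is a left-multiple of $h$. $\mathcal C$ admits conditional weak left-lcms if, whenever $f,g$ admit a common left-multiple $h_0$, they admit a weak left-lcm $h$ such that $h_0$ is a left-multiple of $h$. $\mathcal C$ is a strong Garside family in itself if for all $f,g,s,t\in\mathcal C$ with $fs=gt$ there exist $f',g',h\in\mathcal C$ such that $f'$ and $g'$ are left-disjoint, $f's=g't$, $f=hf'$ and $g=hg'$. *)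

theory Defs
  imports Main
begin

text \<open>A (small) category is given by a set of objects Ob, a set of morphisms C,
  source and target maps, a composition cmp (written fg in the paper, meaning
  "first f, then g", defined when tgt f = src g) and identities.\<close>

definition category ::
  "'o set \<Rightarrow> 'a set \<Rightarrow> ('a \<Rightarrow> 'o) \<Rightarrow> ('a \<Rightarrow> 'o) \<Rightarrow> ('a \<Rightarrow> 'a \<Rightarrow> 'a) \<Rightarrow> ('o \<Rightarrow> 'a) \<Rightarrow> bool" where
  "category Ob C src tgt cmp ident \<longleftrightarrow>
     (\<forall>f\<in>C. src f \<in> Ob \<and> tgt f \<in> Ob) \<and>
     (\<forall>f\<in>C. \<forall>g\<in>C. tgt f = src g \<longrightarrow>
         cmp f g \<in> C \<and> src (cmp f g) = src f \<and> tgt (cmp f g) = tgt g) \<and>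
     (\<forall>f\<in>C. \<forall>g\<in>C. \<forall>h\<in>C. tgt f = src g \<and> tgt g = src h \<longrightarrow>
         cmp (cmp f g) h = cmp f (cmp g h)) \<and>
     (\<forall>x\<in>Ob. ident x \<in> C \<and> src (ident x) = x \<and> tgt (ident x) = x) \<and>
     (\<forall>f\<in>C. cmp (ident (src f)) f = f \<and> cmp f (ident (tgt f)) = f)"

definition cancellative :: "'a set \<Rightarrow> ('a \<Rightarrow> 'o) \<Rightarrow> ('a \<Rightarrow> 'o) \<Rightarrow> ('a \<Rightarrow> 'a \<Rightarrow> 'a) \<Rightarrow> bool" where
  "cancellative C src tgt cmp \<longleftrightarrow>
     (\<forall>f\<in>C. \<forall>g\<in>C. \<forall>g'\<in>C. tgt f = src g \<and> tgt f = src g' \<and> cmp f g = cmp f g' \<longrightarrow> g = g') \<and>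
     (\<forall>f\<in>C. \<forall>g\<in>C. \<forall>g'\<in>C. tgt g = src f \<and> tgt g' = src f \<and> cmp g f = cmp g' f \<longrightarrow> g = g')"

definition ldiv :: "'a set \<Rightarrow> ('a \<Rightarrow> 'o) \<Rightarrow> ('a \<Rightarrow> 'o) \<Rightarrow> ('a \<Rightarrow> 'a \<Rightarrow> 'a) \<Rightarrow> 'a \<Rightarrow> 'a \<Rightarrow> bool" where
  "ldiv C src tgt cmp f g \<longleftrightarrow> (\<exists>g'\<in>C. src g' = tgt f \<and> g = cmp f g')"

definition lmult :: "'a set \<Rightarrow> ('a \<Rightarrow> 'o) \<Rightarrow> ('a \<Rightarrow> 'o) \<Rightarrow> ('a \<Rightarrow> 'a \<Rightarrow> 'a) \<Rightarrow> 'a \<Rightarrow> 'a \<Rightarrow> bool" where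
  "lmult C src tgt cmp h f \<longleftrightarrow> (\<exists>k\<in>C. tgt k = src f \<and> h = cmp k f)"

definition common_lmult :: "'a set \<Rightarrow> ('a \<Rightarrow> 'o) \<Rightarrow> ('a \<Rightarrow> 'o) \<Rightarrow> ('a \<Rightarrow> 'a \<Rightarrow> 'a) \<Rightarrow> 'a \<Rightarrow> 'a \<Rightarrow> 'a \<Rightarrow> bool" where
  "common_lmult C src tgt cmp h f g \<longleftrightarrow>
     h \<in> C \<and> lmult C src tgt cmp h f \<and> lmult C src tgt cmp h g"

definition left_disjoint :: "'a set \<Rightarrow> ('a \<Rightarrow> 'o) \<Rightarrow> ('a \<Rightarrow> 'o) \<Rightarrow> ('a \<Rightarrow> 'a \<Rightarrow> 'a) \<Rightarrow> 'a \<Rightarrow> 'a \<Rightarrow> bool" where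
  "left_disjoint C src tgt cmp f g \<longleftrightarrow> src f = src g \<and>
     (\<forall>h\<in>C. \<forall>h'\<in>C. tgt h' = src f \<and>
         ldiv C src tgt cmp h (cmp h' f) \<and> ldiv C src tgt cmp h (cmp h' g)
         \<longrightarrow> ldiv C src tgt cmp h h')"

definition weak_left_lcm :: "'a set \<Rightarrow> ('a \<Rightarrow> 'o) \<Rightarrow> ('a \<Rightarrow> 'o) \<Rightarrow> ('a \<Rightarrow> 'a \<Rightarrow> 'a) \<Rightarrow> 'a \<Rightarrow> 'a \<Rightarrow> 'a \<Rightarrow> bool" where
  "weak_left_lcm C src tgt cmp h f g \<longleftrightarrow>
     common_lmult C src tgt cmp h f g \<and>
     (\<forall>h'. common_lmult C src tgt cmp h' f g \<and> (\<exists>m. common_lmult C src tgt cmp m h' h)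
        \<longrightarrow> lmult C src tgt cmp h' h)"

definition cond_weak_left_lcms :: "'a set \<Rightarrow> ('a \<Rightarrow> 'o) \<Rightarrow> ('a \<Rightarrow> 'o) \<Rightarrow> ('a \<Rightarrow> 'a \<Rightarrow> 'a) \<Rightarrow> bool" where
  "cond_weak_left_lcms C src tgt cmp \<longleftrightarrow>
     (\<forall>f\<in>C. \<forall>g\<in>C. \<forall>h0. common_lmult C src tgt cmp h0 f g \<longrightarrow>
        (\<exists>h. weak_left_lcm C src tgt cmp h f g \<and> lmult C src tgt cmp h0 h))"

definition strong_garside_in_itself :: "'a set \<Rightarrow> ('a \<Rightarrow> 'o) \<Rightarrow> ('a \<Rightarrow> 'o) \<Rightarrow> ('a \<Rightarrow> 'a \<Rightarrow> 'a) \<Rightarrow> bool" where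
  "strong_garside_in_itself C src tgt cmp \<longleftrightarrow>
     (\<forall>f\<in>C. \<forall>g\<in>C. \<forall>s\<in>C. \<forall>t\<in>C.
        tgt f = src s \<and> tgt g = src t \<and> cmp f s = cmp g t \<longrightarrow>
        (\<exists>f'\<in>C. \<exists>g'\<in>C. \<exists>h\<in>C.
           left_disjoint C src tgt cmp f' g' \<and>
           tgt f' = src s \<and> tgt g' = src t \<and> cmp f' s = cmp g' t \<and>
           tgt h = src f' \<and> tgt h = src g' \<and> f = cmp h f' \<and> g = cmp h g'))"

end

theory Submission
  imports Defs
begin

text \<open>Both directions rest on one correspondence. If \<open>w = f' s = g' t\<close> is a weak left-lcm
  of \<open>s, t\<close>, then \<open>f', g'\<close> are left-disjoint: a common left-divisor \<open>k\<close> of \<open>h' f'\<close>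
  and \<open>h' g'\<close> yields a common left-multiple \<open>x\<close> of \<open>s, t\<close> with \<open>h' w = k x\<close>, so \<open>x\<close>
  factors through \<open>w\<close> and cancellation gives \<open>k \<preccurlyeq> h'\<close>. Conversely, if \<open>a', b'\<close> are
  left-disjoint with \<open>a' f = b' g\<close>, this element is a weak left-lcm of \<open>f, g\<close>. Factoring a
  common left-multiple \<open>h\<^sub>0\<close> through a weak left-lcm, or a pair \<open>(f, g)\<close> through a
  left-disjoint pair, then turns each property into the other.\<close>

locale cancellative_semicategory =
  fixes C :: "'a set" and src tgt :: "'a \<Rightarrow> 'o"
    and cmp :: "'a \<Rightarrow> 'a \<Rightarrow> 'a" (infixl \<open>\<cdot>\<close> 70)
  assumes comp_closed: "\<lbrakk>f \<in> C; g \<in> C; tgt f = src g\<rbrakk> \<Longrightarrow> f \<cdot> g \<in> C"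
    and src_comp: "\<lbrakk>f \<in> C; g \<in> C; tgt f = src g\<rbrakk> \<Longrightarrow> src (f \<cdot> g) = src f"
    and tgt_comp: "\<lbrakk>f \<in> C; g \<in> C; tgt f = src g\<rbrakk> \<Longrightarrow> tgt (f \<cdot> g) = tgt g"
    and assoc: "\<lbrakk>f \<in> C; g \<in> C; h \<in> C; tgt f = src g; tgt g = src h\<rbrakk>
      \<Longrightarrow> (f \<cdot> g) \<cdot> h = f \<cdot> (g \<cdot> h)"
    and cancel_left: "\<lbrakk>f \<in> C; g \<in> C; g' \<in> C; tgt f = src g; tgt f = src g'; f \<cdot> g = f \<cdot> g'\<rbrakk>
      \<Longrightarrow> g = g'"
    and cancel_right: "\<lbrakk>f \<in> C; g \<in> C; g' \<in> C; tgt g = src f; tgt g' = src f; g \<cdot> f = g' \<cdot> f\<rbrakk>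
      \<Longrightarrow> g = g'"

lemma cancellative_semicategoryI:
  assumes "category Ob C src tgt cmp ident" and "cancellative C src tgt cmp"
  shows "cancellative_semicategory C src tgt cmp"
  using assms unfolding category_def cancellative_def cancellative_semicategory_def by blast

context cancellative_semicategory
begin

lemma cancel_right_assoc:
  assumes "x \<in> C" "y \<in> C" "x' \<in> C" "y' \<in> C" "s \<in> C"
    and "tgt x = src y" "tgt y = src s" "tgt x' = src y'" "tgt y' = src s"
    and "x \<cdot> (y \<cdot> s) = x' \<cdot> (y' \<cdot> s)"
  shows "x \<cdot> y = x' \<cdot> y'"
proof (rule cancel_right)
  show "(x \<cdot> y) \<cdot> s = (x' \<cdot> y') \<cdot> s"
    using assms by (simp add: assoc)
qed (use assms in \<open>simp_all add: comp_closed tgt_comp\<close>)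

lemma weak_left_lcm_left_disjoint:
  assumes lcm: "weak_left_lcm C src tgt cmp w s t"
    and C: "f' \<in> C" "g' \<in> C" "s \<in> C" "t \<in> C"
    and tgt: "tgt f' = src s" "tgt g' = src t"
    and w: "w = f' \<cdot> s" "w = g' \<cdot> t"
  shows "left_disjoint C src tgt cmp f' g'"
  unfolding left_disjoint_def
proof (intro conjI ballI impI)
  have wC: "w \<in> C" using C tgt w comp_closed by blast
  have src_w: "src w = src f'" "src w = src g'" using C tgt w by (metis src_comp)+
  then show "src f' = src g'" by simp
  fix k h' assume kC: "k \<in> C" and h'C: "h' \<in> C"
    and div: "tgt h' = src f' \<and> ldiv C src tgt cmp k (h' \<cdot> f') \<and> ldiv C src tgt cmp k (h' \<cdot> g')"
  then obtain a b where aC: "a \<in> C" and src_a: "src a = tgt k" and ha: "h' \<cdot> f' = k \<cdot> a"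
    and bC: "b \<in> C" and src_b: "src b = tgt k" and hb: "h' \<cdot> g' = k \<cdot> b"
    unfolding ldiv_def by blast
  have tgt_a: "tgt a = src s" using tgt_comp[OF h'C C(1)] tgt_comp[OF kC aC] div src_a ha tgt by metis
  have tgt_b: "tgt b = src t" using tgt_comp[OF h'C C(2)] tgt_comp[OF kC bC] div src_b hb tgt src_w by metis
  have hw_a: "h' \<cdot> w = k \<cdot> (a \<cdot> s)"
    using assoc[OF h'C C(1,3)] assoc[OF kC aC C(3)] div tgt ha w src_a tgt_a by metis
  have hw_b: "h' \<cdot> w = k \<cdot> (b \<cdot> t)"
    using assoc[OF h'C C(2,4)] assoc[OF kC bC C(4)] div tgt hb w src_b tgt_b src_w by metis
  define x where "x = a \<cdot> s"
  have xC: "x \<in> C" and src_x: "src x = tgt k"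
    using aC C tgt_a src_a comp_closed src_comp x_def by auto
  have x_bt: "x = b \<cdot> t"
    using cancel_left[OF kC xC comp_closed[OF bC C(4) tgt_b]] hw_a hw_b src_x src_comp[OF bC C(4) tgt_b]
      src_b x_def by metis
  \<comment> \<open>\<open>x\<close> is a common left-multiple of \<open>s, t\<close> sharing the left-multiple \<open>h' w\<close> with \<open>w\<close>,
      so by weak minimality of \<open>w\<close> it factors through \<open>w\<close>.\<close>
  have "common_lmult C src tgt cmp x s t"
    unfolding common_lmult_def lmult_def using xC aC bC tgt_a tgt_b x_bt x_def by blast
  moreover have "common_lmult C src tgt cmp (h' \<cdot> w) x w"
    unfolding common_lmult_def lmult_def
    using comp_closed[OF h'C wC] div src_w kC src_x hw_a x_def h'C by metis
  ultimately have "lmult C src tgt cmp x w" using lcm unfolding weak_left_lcm_def by blast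
  then obtain c where cC: "c \<in> C" and tgt_c: "tgt c = src w" and x_cw: "x = c \<cdot> w"
    unfolding lmult_def by blast
  have src_c: "src c = tgt k" using src_comp[OF cC wC tgt_c] x_cw src_x by simp
  have "(k \<cdot> c) \<cdot> w = h' \<cdot> w" using assoc[OF kC cC wC] src_c tgt_c x_cw hw_a x_def by simp
  then have "k \<cdot> c = h'"
    using cancel_right[OF wC comp_closed[OF kC cC] h'C] tgt_comp[OF kC cC] src_c tgt_c div src_w
    by metis
  then show "ldiv C src tgt cmp k h'" unfolding ldiv_def using cC src_c by blast
qed

lemma left_disjoint_weak_left_lcm:
  assumes disj: "left_disjoint C src tgt cmp a' b'"
    and C: "a' \<in> C" "b' \<in> C" "f \<in> C" "g \<in> C"
    and tgt: "tgt a' = src f" "tgt b' = src g"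
    and eq: "a' \<cdot> f = b' \<cdot> g"
  shows "weak_left_lcm C src tgt cmp (a' \<cdot> f) f g"
  unfolding weak_left_lcm_def
proof (intro conjI allI impI)
  define w where "w = a' \<cdot> f"
  have wC: "w \<in> C" and src_w: "src w = src a'" using C tgt comp_closed src_comp w_def by auto
  have src_b': "src b' = src a'" using disj unfolding left_disjoint_def by simp
  show "common_lmult C src tgt cmp (a' \<cdot> f) f g"
    unfolding common_lmult_def lmult_def using wC C tgt eq w_def by blast
  fix h' assume "common_lmult C src tgt cmp h' f g \<and> (\<exists>m. common_lmult C src tgt cmp m h' (a' \<cdot> f))"
  then obtain p q u v where h'C: "h' \<in> C"
    and pC: "p \<in> C" and tgt_p: "tgt p = src f" and h'_p: "h' = p \<cdot> f"
    and qC: "q \<in> C" and tgt_q: "tgt q = src g" and h'_q: "h' = q \<cdot> g"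
    and uC: "u \<in> C" and tgt_u: "tgt u = src h'"
    and vC: "v \<in> C" and tgt_v: "tgt v = src w" and uv: "u \<cdot> h' = v \<cdot> w"
    unfolding common_lmult_def lmult_def w_def by metis
  have src_p: "src p = tgt u" and src_q: "src q = tgt u"
    using src_comp pC qC C tgt_p tgt_q h'_p h'_q tgt_u by metis+
  have up: "u \<cdot> p = v \<cdot> a'"
    using cancel_right_assoc[OF uC pC vC C(1,3)] src_p tgt_p tgt_v src_w tgt uv h'_p w_def by metis
  have uq: "u \<cdot> q = v \<cdot> b'"
    using cancel_right_assoc[OF uC qC vC C(2,4)] src_q tgt_q tgt_v src_w src_b' tgt uv h'_q eq w_def
    by metis
  have "ldiv C src tgt cmp u (v \<cdot> a')" and "ldiv C src tgt cmp u (v \<cdot> b')"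
    unfolding ldiv_def using pC qC src_p src_q up uq by metis+
  then have "ldiv C src tgt cmp u v"
    using disj uC vC tgt_v src_w unfolding left_disjoint_def by metis
  then obtain c where cC: "c \<in> C" and src_c: "src c = tgt u" and v_uc: "v = u \<cdot> c"
    unfolding ldiv_def by blast
  have tgt_c: "tgt c = src a'" using tgt_comp[OF uC cC] src_c v_uc tgt_v src_w by metis
  have "u \<cdot> p = u \<cdot> (c \<cdot> a')" using up v_uc assoc[OF uC cC C(1)] src_c tgt_c by metis
  then have "p = c \<cdot> a'"
    using cancel_left[OF uC pC comp_closed[OF cC C(1) tgt_c]] src_p src_comp[OF cC C(1) tgt_c] src_c
    by metis
  then have "h' = c \<cdot> w" using h'_p assoc[OF cC C(1,3)] tgt_c tgt w_def by metis
  then show "lmult C src tgt cmp h' (a' \<cdot> f)"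
    unfolding lmult_def using cC tgt_c src_w w_def by metis
qed

lemma cond_weak_left_lcms_imp_strong_garside:
  assumes "cond_weak_left_lcms C src tgt cmp"
  shows "strong_garside_in_itself C src tgt cmp"
  unfolding strong_garside_in_itself_def
proof (intro ballI impI)
  fix f g s t assume fC: "f \<in> C" and gC: "g \<in> C" and sC: "s \<in> C" and tC: "t \<in> C"
    and eq: "tgt f = src s \<and> tgt g = src t \<and> f \<cdot> s = g \<cdot> t"
  have "common_lmult C src tgt cmp (f \<cdot> s) s t"
    unfolding common_lmult_def lmult_def using fC gC sC eq comp_closed by metis
  then obtain w h where lcm: "weak_left_lcm C src tgt cmp w s t"
    and hC: "h \<in> C" and tgt_h: "tgt h = src w" and fs: "f \<cdot> s = h \<cdot> w"
    using assms sC tC unfolding cond_weak_left_lcms_def lmult_def by blast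
  then obtain f' g' where f'C: "f' \<in> C" and tgt_f': "tgt f' = src s" and w_f': "w = f' \<cdot> s"
    and g'C: "g' \<in> C" and tgt_g': "tgt g' = src t" and w_g': "w = g' \<cdot> t"
    unfolding weak_left_lcm_def common_lmult_def lmult_def by blast
  have src_f': "src f' = src w" and src_g': "src g' = src w"
    using src_comp f'C g'C sC tC tgt_f' tgt_g' w_f' w_g' by metis+
  have f_hf': "f = h \<cdot> f'"
  proof (rule cancel_right[OF sC fC comp_closed[OF hC f'C]])
    show "f \<cdot> s = h \<cdot> f' \<cdot> s" using fs w_f' assoc[OF hC f'C sC] tgt_h src_f' tgt_f' by simp
  qed (use eq hC f'C tgt_h src_f' tgt_f' tgt_comp in auto)
  have g_hg': "g = h \<cdot> g'"
  proof (rule cancel_right[OF tC gC comp_closed[OF hC g'C]])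
    show "g \<cdot> t = h \<cdot> g' \<cdot> t" using eq fs w_g' assoc[OF hC g'C tC] tgt_h src_g' tgt_g' by simp
  qed (use eq hC g'C tgt_h src_g' tgt_g' tgt_comp in auto)
  have "left_disjoint C src tgt cmp f' g'"
    using weak_left_lcm_left_disjoint[OF lcm f'C g'C sC tC tgt_f' tgt_g' w_f' w_g'] .
  then show "\<exists>f'\<in>C. \<exists>g'\<in>C. \<exists>h\<in>C. left_disjoint C src tgt cmp f' g' \<and>
      tgt f' = src s \<and> tgt g' = src t \<and> f' \<cdot> s = g' \<cdot> t \<and>
      tgt h = src f' \<and> tgt h = src g' \<and> f = h \<cdot> f' \<and> g = h \<cdot> g'"
    using f'C g'C hC tgt_f' tgt_g' w_f' w_g' tgt_h src_f' src_g' f_hf' g_hg' by metis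
qed

lemma strong_garside_imp_cond_weak_left_lcms:
  assumes "strong_garside_in_itself C src tgt cmp"
  shows "cond_weak_left_lcms C src tgt cmp"
  unfolding cond_weak_left_lcms_def
proof (intro ballI allI impI)
  fix f g h0 assume fC: "f \<in> C" and gC: "g \<in> C" and "common_lmult C src tgt cmp h0 f g"
  then obtain a b where aC: "a \<in> C" and tgt_a: "tgt a = src f" and h0_a: "h0 = a \<cdot> f"
    and bC: "b \<in> C" and tgt_b: "tgt b = src g" and h0_b: "h0 = b \<cdot> g"
    unfolding common_lmult_def lmult_def by blast
  then obtain a' b' h where a'C: "a' \<in> C" and b'C: "b' \<in> C" and hC: "h \<in> C"
    and disj: "left_disjoint C src tgt cmp a' b'" and tgt_a': "tgt a' = src f"
    and tgt_b': "tgt b' = src g" and eq: "a' \<cdot> f = b' \<cdot> g"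
    and tgt_h: "tgt h = src a'" and a_ha': "a = h \<cdot> a'"
    using assms fC gC unfolding strong_garside_in_itself_def by metis
  have "weak_left_lcm C src tgt cmp (a' \<cdot> f) f g"
    using left_disjoint_weak_left_lcm[OF disj a'C b'C fC gC tgt_a' tgt_b' eq] .
  moreover have "lmult C src tgt cmp h0 (a' \<cdot> f)"
    unfolding lmult_def using hC tgt_h src_comp[OF a'C fC tgt_a'] h0_a a_ha' assoc[OF hC a'C fC] tgt_a'
    by metis
  ultimately show "\<exists>w. weak_left_lcm C src tgt cmp w f g \<and> lmult C src tgt cmp h0 w" by blast
qed

end

theorem mainTheorem5:
  fixes Ob :: "'o set" and C :: "'a set" and src tgt :: "'a \<Rightarrow> 'o"
    and cmp :: "'a \<Rightarrow> 'a \<Rightarrow> 'a" and ident :: "'o \<Rightarrow> 'a"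
  assumes "category Ob C src tgt cmp ident"
    and "cancellative C src tgt cmp"
  shows "cond_weak_left_lcms C src tgt cmp \<longleftrightarrow> strong_garside_in_itself C src tgt cmp"
proof -
  interpret cancellative_semicategory C src tgt cmp
    using assms by (rule cancellative_semicategoryI)
  show ?thesis
    using cond_weak_left_lcms_imp_strong_garside strong_garside_imp_cond_weak_left_lcms by blast
qed

end
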